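(* Let $\mathcal{C}$ be a finite set of latent classes with cardinality $N_{\mathcal{C}}$, let $\rho$ be a probability distribution on $\mathcal{C}$ with $\rho(c)>0$ for all $c\in\mathcal{C}$, and for each $c\in\mathcal{C}$ let $\mathcal{D}_c$ be a distribution on a feature space $\mathcal{X}$. Then for any encoder $f:\mathcal{X}\to\mathbb{R}^d$, $$L_{\mathrm{sup}}(f,\mathcal{C}) \le L^\mu_{\mathrm{sup}}(f,\mathcal{C}) \le \frac{1}{p^\rho_{\min}} L_{\mathrm{un}}(f) + \log N_{\mathcal{C}},$$ where $p^\rho_{\min}=\min_{c\in\mathcal{C}}\rho(c)$.
   Context: Positive pairs are drawn from $\mathcal{D}_{\mathrm{sim}}(x,x^+)=\sum_{c\in\mathcal{C}}\rho(c)\mathcal{D}_c(x)\mathcal{D}_c(x^+)$ and negatives from $\mathcal{D}_{\mathrm{neg}}(x^-)=\sum_{c\in\mathcal{C}}\rho(c)\mathcal{D}_c(x^-)$. The unsupervised loss with one negative is $$L_{\mathrm{un}}(f)=\mathbb{E}_{(x,x^+)\sim\mathcal{D}_{\mathrm{sim}},\,x^-\sim\mathcal{D}_{\mathrm{neg}}}\Big[-\log\frac{\exp(f(x)^Tf(x^+))}{\exp(f(x)^Tf(x^+))+\exp(f(x)^Tf(x^-))}\Big].$$ With $\mathcal{D}_{\mathcal{C}}(x,c)=\rho(c)\mathcal{D}_c(x)$, the supervised loss is $$L_{\mathrm{sup}}(f,\mathcal{C})=\inf_{W\in\mathbb{R}^{N_{\mathcal{C}}\times d}}\mathbb{E}_{(x,c)\sim\mathcal{D}_{\mathcal{C}}}\Big[-\log\frac{\exp((Wf(x))_c)}{\sum_{c'\in\mathcal{C}}\exp((Wf(x))_{c'})}\Big],$$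 and $L^\mu_{\mathrm{sup}}(f,\mathcal{C})$ is the same expectation evaluated at the mean classifier $W^\mu$ whose row indexed by $c$ is $\mu_c=\mathbb{E}_{x\sim\mathcal{D}_c}[f(x)]$ (no infimum). *)

theory Defs
  imports "HOL-Probability.Probability"
begin

text \<open>Classes have type 'c, the finite set of
latent classes is C, rho :: 'c => real is the class distribution, and D c is the
class-conditional distribution (a probability measure on the feature space).\<close>

text \<open>Per-sample losses (both are nonnegative, hence no truncation by ennreal).\<close>
definition un_loss :: "('a \<Rightarrow> real^'d) \<Rightarrow> 'a \<Rightarrow> 'a \<Rightarrow> 'a \<Rightarrow> real" where
  "un_loss f x xp xn =
     - ln (exp (f x \<bullet> f xp) / (exp (f x \<bullet> f xp) + exp (f x \<bullet> f xn)))"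

definition sup_loss :: "'c set \<Rightarrow> ('c \<Rightarrow> real^'d) \<Rightarrow> ('a \<Rightarrow> real^'d) \<Rightarrow> 'a \<Rightarrow> 'c \<Rightarrow> real" where
  "sup_loss C W f x c =
     - ln (exp (W c \<bullet> f x) / (\<Sum>c'\<in>C. exp (W c' \<bullet> f x)))"

text \<open>Unsupervised loss: expectation over (x,x+) ~ D_sim and x- ~ D_neg, where
D_sim = sum_c rho(c) D_c(x) D_c(x+) and D_neg = sum_c rho(c) D_c(x-), written out.\<close>
definition L_un :: "'c set \<Rightarrow> ('c \<Rightarrow> real) \<Rightarrow> ('c \<Rightarrow> 'a measure) \<Rightarrow> ('a \<Rightarrow> real^'d) \<Rightarrow> ennreal" where
  "L_un C \<rho> D f =
     (\<Sum>c\<in>C. \<Sum>c'\<in>C. ennreal (\<rho> c * \<rho> c') *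
        (\<integral>\<^sup>+ x. \<integral>\<^sup>+ xp. \<integral>\<^sup>+ xn. ennreal (un_loss f x xp xn) \<partial>D c' \<partial>D c \<partial>D c))"

text \<open>Supervised loss of the linear classifier W (row c of W is W c), under
D_C(x,c) = rho(c) D_c(x).\<close>
definition L_sup_W :: "'c set \<Rightarrow> ('c \<Rightarrow> real) \<Rightarrow> ('c \<Rightarrow> 'a measure) \<Rightarrow> ('a \<Rightarrow> real^'d)
    \<Rightarrow> ('c \<Rightarrow> real^'d) \<Rightarrow> ennreal" where
  "L_sup_W C \<rho> D f W =
     (\<Sum>c\<in>C. ennreal (\<rho> c) * (\<integral>\<^sup>+ x. ennreal (sup_loss C W f x c) \<partial>D c))"

definition L_sup :: "'c set \<Rightarrow> ('c \<Rightarrow> real) \<Rightarrow> ('c \<Rightarrow> 'a measure) \<Rightarrow> ('a \<Rightarrow> real^'d) \<Rightarrow> ennreal" where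
  "L_sup C \<rho> D f = (INF W. L_sup_W C \<rho> D f W)"

definition mean_classifier :: "('c \<Rightarrow> 'a measure) \<Rightarrow> ('a \<Rightarrow> real^'d) \<Rightarrow> 'c \<Rightarrow> real^'d" where
  "mean_classifier D f c = (\<integral> x. f x \<partial>D c)"

definition L_sup_mu :: "'c set \<Rightarrow> ('c \<Rightarrow> real) \<Rightarrow> ('c \<Rightarrow> 'a measure) \<Rightarrow> ('a \<Rightarrow> real^'d) \<Rightarrow> ennreal" where
  "L_sup_mu C \<rho> D f = L_sup_W C \<rho> D f (mean_classifier D f)"

end

(*
  With softplus t = ln (1 + exp t), the per-sample unsupervised loss is
  softplus ((f x- - f x+) . f x).  Since softplus is convex, Jensen's inequality in x+ ~ D_c
  and x- ~ D_c' bounds its expectation from below by softplus ((mu_c' - mu_c) . f x).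
  On the other side, the supervised loss of the mean classifier at (x, c) is the log-sum-exp
  ln (sum_c' exp ((mu_c' - mu_c) . f x)), which is at most
  ln N + sum_c' softplus ((mu_c' - mu_c) . f x) because t <= softplus t and softplus >= 0.
  Inflating each summand by the factor rho c' / p_min >= 1 and averaging over c ~ rho and
  x ~ D_c gives the second inequality; the first holds because the mean classifier is one
  of the classifiers in the infimum.
*)
theory Submission
  imports Defs
begin

definition softplus :: "real \<Rightarrow> real" where
  "softplus t = ln (1 + exp t)"

lemma softplus_nonneg: "0 \<le> softplus t"
  unfolding softplus_def by simp

lemma le_softplus: "t \<le> softplus t"
  unfolding softplus_def by (subst ln_ge_iff) (auto simp: add_pos_pos)

lemma convex_on_softplus: "convex_on UNIV softplus"
proof (rule convex_on_realI)
  show "(softplus has_real_derivative exp t / (1 + exp t)) (at t)" for t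
    unfolding softplus_def[abs_def] by (auto intro!: derivative_eq_intros simp: add_pos_pos)
  show "exp s / (1 + exp s) \<le> exp t / (1 + exp t)" if "s \<le> t" for s t :: real
  proof -
    have "exp s \<le> exp t" using that by simp
    then have "exp s * (1 + exp t) \<le> exp t * (1 + exp s)"
      by (simp add: algebra_simps)
    then show ?thesis by (simp add: divide_simps add_pos_pos)
  qed
qed simp

lemma (in prob_space) jensens_inequality_nn_integral:
  fixes q :: "real \<Rightarrow> real"
  assumes h: "integrable M h" and q: "convex_on UNIV q" "\<And>t. 0 \<le> q t"
  shows "ennreal (q (expectation h)) \<le> (\<integral>\<^sup>+ x. ennreal (q (h x)) \<partial>M)"
proof (cases "integrable M (\<lambda>x. q (h x))")
  case True
  have "q (expectation h) \<le> expectation (\<lambda>x. q (h x))"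
    by (rule jensens_inequality[OF h _ _ True q(1)]) simp_all
  moreover have "(\<integral>\<^sup>+ x. ennreal (q (h x)) \<partial>M) = ennreal (expectation (\<lambda>x. q (h x)))"
    using True by (rule nn_integral_eq_integral) (simp add: q(2))
  ultimately show ?thesis
    by (simp add: ennreal_leI)
next
  case False
  have meas: "(\<lambda>x. q (h x)) \<in> borel_measurable M"
    using borel_measurable_integrable[OF h] _ open_UNIV q(1) by (rule convex_measurable) simp
  have "\<not> (\<integral>\<^sup>+ x. ennreal (q (h x)) \<partial>M) < \<infinity>"
  proof
    assume "(\<integral>\<^sup>+ x. ennreal (q (h x)) \<partial>M) < \<infinity>"
    with meas have "integrable M (\<lambda>x. q (h x))"
      by (intro integrableI_nonneg) (simp_all add: q(2))
    with False show False by contradiction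
  qed
  then show ?thesis by (simp add: not_less top_unique)
qed

lemma un_loss_eq_softplus: "un_loss f x xp xn = softplus ((f xn - f xp) \<bullet> f x)"
proof -
  define a b where "a = f x \<bullet> f xp" and "b = f x \<bullet> f xn"
  have "exp a / (exp a + exp b) = inverse (1 + exp (b - a))"
    by (simp add: exp_diff field_simps add_pos_pos)
  then show ?thesis
    unfolding un_loss_def softplus_def a_def b_def
    by (simp add: ln_inverse add_pos_pos inner_diff_right inner_commute)
qed

lemma (in prob_space) softplus_expectation_le:
  assumes "integrable M f"
  shows "ennreal (softplus ((expectation f - a) \<bullet> v))
    \<le> (\<integral>\<^sup>+ y. ennreal (softplus ((f y - a) \<bullet> v)) \<partial>M)"
proof -
  have "(\<integral>y. (f y - a) \<bullet> v \<partial>M) = (expectation f - a) \<bullet> v"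
    using assms by (simp add: inner_diff_left prob_space)
  then show ?thesis
    using jensens_inequality_nn_integral[of "\<lambda>y. (f y - a) \<bullet> v", OF _ convex_on_softplus softplus_nonneg]
      assms by simp
qed

lemma softplus_mean_diff_le_un_loss:
  fixes f :: "'a \<Rightarrow> real^'d"
  assumes M: "prob_space M" "integrable M f" and N: "prob_space N" "integrable N f"
  shows "ennreal (softplus (((\<integral>y. f y \<partial>N) - (\<integral>y. f y \<partial>M)) \<bullet> f x))
    \<le> (\<integral>\<^sup>+ xp. \<integral>\<^sup>+ xn. ennreal (un_loss f x xp xn) \<partial>N \<partial>M)"
proof -
  have "((\<integral>y. f y \<partial>N) - (\<integral>y. f y \<partial>M)) \<bullet> f x = ((\<integral>y. f y \<partial>M) - (\<integral>y. f y \<partial>N)) \<bullet> - f x"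
    by (simp add: inner_diff_left)
  also have "ennreal (softplus \<dots>) \<le> (\<integral>\<^sup>+ xp. ennreal (softplus ((f xp - (\<integral>y. f y \<partial>N)) \<bullet> - f x)) \<partial>M)"
    using prob_space.softplus_expectation_le[OF M] .
  also have "\<dots> \<le> (\<integral>\<^sup>+ xp. \<integral>\<^sup>+ xn. ennreal (un_loss f x xp xn) \<partial>N \<partial>M)"
  proof (intro nn_integral_mono)
    fix xp
    have "(f xp - (\<integral>y. f y \<partial>N)) \<bullet> - f x = ((\<integral>y. f y \<partial>N) - f xp) \<bullet> f x"
      by (simp add: inner_diff_left)
    also have "ennreal (softplus \<dots>) \<le> (\<integral>\<^sup>+ xn. ennreal (un_loss f x xp xn) \<partial>N)"
      unfolding un_loss_eq_softplus using prob_space.softplus_expectation_le[OF N] .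
    finally show "ennreal (softplus ((f xp - (\<integral>y. f y \<partial>N)) \<bullet> - f x)) \<le> \<dots>" .
  qed
  finally show ?thesis .
qed

lemma ln_sum_exp_le:
  assumes "finite A" "A \<noteq> {}"
  shows "ln (\<Sum>a\<in>A. exp (g a)) \<le> ln (card A) + (\<Sum>a\<in>A. softplus (g a))"
proof -
  have "(\<Sum>a\<in>A. exp (g a)) \<le> (\<Sum>a\<in>A. exp (\<Sum>b\<in>A. softplus (g b)))"
  proof (rule sum_mono)
    fix a assume "a \<in> A"
    have "g a \<le> softplus (g a)" by (rule le_softplus)
    also have "\<dots> \<le> (\<Sum>b\<in>A. softplus (g b))"
      using assms(1) \<open>a \<in> A\<close> by (intro member_le_sum) (auto simp: softplus_nonneg)
    finally show "exp (g a) \<le> exp (\<Sum>b\<in>A. softplus (g b))" by simp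
  qed
  moreover have "0 < (\<Sum>a\<in>A. exp (g a))"
    using assms by (intro sum_pos) auto
  ultimately have "ln (\<Sum>a\<in>A. exp (g a)) \<le> ln (card A * exp (\<Sum>b\<in>A. softplus (g b)))"
    by (simp add: ln_mono)
  also have "\<dots> = ln (card A) + (\<Sum>a\<in>A. softplus (g a))"
    using assms by (simp add: ln_mult)
  finally show ?thesis .
qed

lemma sup_loss_eq_ln_sum_exp:
  assumes "finite C" "c \<in> C"
  shows "sup_loss C W f x c = ln (\<Sum>c'\<in>C. exp ((W c' - W c) \<bullet> f x))"
proof -
  let ?S = "\<Sum>c'\<in>C. exp ((W c' - W c) \<bullet> f x)"
  have "0 < ?S"
    using assms by (intro sum_pos) auto
  have "(\<Sum>c'\<in>C. exp (W c' \<bullet> f x)) = exp (W c \<bullet> f x) * ?S"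
    by (simp add: sum_distrib_left inner_diff_left exp_diff)
  then have "exp (W c \<bullet> f x) / (\<Sum>c'\<in>C. exp (W c' \<bullet> f x)) = inverse ?S"
    by (simp add: inverse_eq_divide)
  then have "sup_loss C W f x c = - ln (inverse ?S)"
    unfolding sup_loss_def by simp
  also have "\<dots> = ln ?S"
    using \<open>0 < ?S\<close> by (simp add: ln_inverse)
  finally show ?thesis .
qed

lemma sum_le_Min_weighted_sum:
  fixes w g :: "'c \<Rightarrow> real"
  assumes "finite A" "\<And>a. a \<in> A \<Longrightarrow> 0 < w a" "\<And>a. a \<in> A \<Longrightarrow> 0 \<le> g a"
  shows "(\<Sum>a\<in>A. g a) \<le> 1 / Min (w ` A) * (\<Sum>a\<in>A. w a * g a)"
proof (cases "A = {}")
  case False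
  then have Min_pos: "0 < Min (w ` A)"
    using assms by (subst Min_gr_iff) auto
  have "g a \<le> 1 / Min (w ` A) * (w a * g a)" if "a \<in> A" for a
  proof -
    have "Min (w ` A) \<le> w a" using assms(1) that by simp
    then have "Min (w ` A) * g a \<le> w a * g a"
      using assms(3)[OF that] by (rule mult_right_mono)
    then show ?thesis using Min_pos by (simp add: field_simps)
  qed
  then show ?thesis
    unfolding sum_distrib_left by (rule sum_mono)
qed simp

lemma sup_loss_le_weighted_softplus:
  assumes "finite C" "c \<in> C" "\<And>c. c \<in> C \<Longrightarrow> 0 < \<rho> c"
  shows "sup_loss C W f x c
    \<le> ln (card C) + 1 / Min (\<rho> ` C) * (\<Sum>c'\<in>C. \<rho> c' * softplus ((W c' - W c) \<bullet> f x))"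
proof -
  have "sup_loss C W f x c = ln (\<Sum>c'\<in>C. exp ((W c' - W c) \<bullet> f x))"
    using assms(1,2) by (rule sup_loss_eq_ln_sum_exp)
  also have "\<dots> \<le> ln (card C) + (\<Sum>c'\<in>C. softplus ((W c' - W c) \<bullet> f x))"
    using assms(1,2) by (intro ln_sum_exp_le[where g = "\<lambda>c'. (W c' - W c) \<bullet> f x"]) auto
  also have "\<dots> \<le> ln (card C) + 1 / Min (\<rho> ` C) * (\<Sum>c'\<in>C. \<rho> c' * softplus ((W c' - W c) \<bullet> f x))"
    using sum_le_Min_weighted_sum[OF assms(1,3) softplus_nonneg] by (rule add_left_mono)
  finally show ?thesis .
qed

lemma nn_integral_sup_loss_mean_classifier_le:
  fixes f :: "'a \<Rightarrow> real^'d"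
  assumes fin: "finite C" and c: "c \<in> C" and pos: "\<And>c. c \<in> C \<Longrightarrow> 0 < \<rho> c"
    and prob: "\<And>c. c \<in> C \<Longrightarrow> prob_space (D c)"
    and int: "\<And>c. c \<in> C \<Longrightarrow> integrable (D c) f"
  shows "(\<integral>\<^sup>+ x. ennreal (sup_loss C (mean_classifier D f) f x c) \<partial>D c)
    \<le> ennreal (ln (card C)) + ennreal (1 / Min (\<rho> ` C)) *
       (\<Sum>c'\<in>C. ennreal (\<rho> c') *
          (\<integral>\<^sup>+ x. \<integral>\<^sup>+ xp. \<integral>\<^sup>+ xn. ennreal (un_loss f x xp xn) \<partial>D c' \<partial>D c \<partial>D c))"
    (is "_ \<le> ennreal ?N + ennreal ?k * _")
proof -
  interpret prob_space "D c" using prob[OF c] .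
  define \<mu> where "\<mu> = mean_classifier D f"
  define s where "s c' x = softplus ((\<mu> c' - \<mu> c) \<bullet> f x)" for c' x
  have N_nonneg: "0 \<le> ?N"
    using fin c by (intro ln_ge_zero) (auto simp: Suc_le_eq card_gt_0_iff)
  have "0 < Min (\<rho> ` C)"
    using fin c pos by (subst Min_gr_iff) auto
  then have k_nonneg: "0 \<le> ?k"
    by simp
  have s_nonneg: "0 \<le> \<rho> c' * s c' x" if "c' \<in> C" for c' x
    using pos[OF that] by (simp add: s_def softplus_nonneg)
  have s_meas: "s c' \<in> borel_measurable (D c)" for c'
    using borel_measurable_integrable[OF int[OF c]] unfolding s_def softplus_def by measurable
  have "ennreal (sup_loss C \<mu> f x c)
      \<le> ennreal ?N + ennreal ?k * (\<Sum>c'\<in>C. ennreal (\<rho> c') * ennreal (s c' x))" for x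
  proof -
    let ?S = "\<Sum>c'\<in>C. \<rho> c' * s c' x"
    have S_nonneg: "0 \<le> ?S"
      using s_nonneg by (simp add: sum_nonneg)
    have "sup_loss C \<mu> f x c \<le> ?N + ?k * ?S"
      unfolding s_def by (rule sup_loss_le_weighted_softplus[OF fin c pos])
    then have "ennreal (sup_loss C \<mu> f x c) \<le> ennreal ?N + ennreal ?k * ennreal ?S"
      unfolding ennreal_mult'[OF k_nonneg, symmetric]
        ennreal_plus[OF N_nonneg mult_nonneg_nonneg[OF k_nonneg S_nonneg], symmetric]
      by (rule ennreal_leI)
    also have "ennreal ?S = (\<Sum>c'\<in>C. ennreal (\<rho> c' * s c' x))"
      using s_nonneg[of _ x] by (rule sum_ennreal[symmetric])
    also have "\<dots> = (\<Sum>c'\<in>C. ennreal (\<rho> c') * ennreal (s c' x))"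
      using pos by (intro sum.cong refl ennreal_mult) (auto simp: less_imp_le s_def softplus_nonneg)
    finally show ?thesis .
  qed
  then have "(\<integral>\<^sup>+ x. ennreal (sup_loss C \<mu> f x c) \<partial>D c)
      \<le> (\<integral>\<^sup>+ x. ennreal ?N + ennreal ?k * (\<Sum>c'\<in>C. ennreal (\<rho> c') * ennreal (s c' x)) \<partial>D c)"
    by (rule nn_integral_mono)
  also have "\<dots> = ennreal ?N + ennreal ?k * (\<Sum>c'\<in>C. ennreal (\<rho> c') * (\<integral>\<^sup>+ x. ennreal (s c' x) \<partial>D c))"
    using s_meas by (simp add: nn_integral_add nn_integral_cmult nn_integral_sum emeasure_space_1)
  also have "\<dots> \<le> ennreal ?N + ennreal ?k *
       (\<Sum>c'\<in>C. ennreal (\<rho> c') *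
          (\<integral>\<^sup>+ x. \<integral>\<^sup>+ xp. \<integral>\<^sup>+ xn. ennreal (un_loss f x xp xn) \<partial>D c' \<partial>D c \<partial>D c))"
  proof (intro add_left_mono mult_left_mono sum_mono nn_integral_mono)
    fix c' x assume c': "c' \<in> C"
    show "ennreal (s c' x) \<le> (\<integral>\<^sup>+ xp. \<integral>\<^sup>+ xn. ennreal (un_loss f x xp xn) \<partial>D c' \<partial>D c)"
      unfolding s_def \<mu>_def mean_classifier_def
      by (rule softplus_mean_diff_le_un_loss[OF prob[OF c] int[OF c] prob[OF c'] int[OF c']])
  qed simp_all
  finally show ?thesis unfolding \<mu>_def .
qed

lemma sum_weighted_add_mult_weighted_sum:
  fixes N k :: ennreal and J :: "'c \<Rightarrow> 'c \<Rightarrow> ennreal"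
  assumes "\<And>c. c \<in> C \<Longrightarrow> 0 \<le> \<rho> c" "(\<Sum>c\<in>C. \<rho> c) = 1"
  shows "(\<Sum>c\<in>C. ennreal (\<rho> c) * (N + k * (\<Sum>c'\<in>C. ennreal (\<rho> c') * J c c')))
    = N + k * (\<Sum>c\<in>C. \<Sum>c'\<in>C. ennreal (\<rho> c * \<rho> c') * J c c')"
proof -
  have "(\<Sum>c\<in>C. ennreal (\<rho> c) * (N + k * (\<Sum>c'\<in>C. ennreal (\<rho> c') * J c c')))
      = N * (\<Sum>c\<in>C. ennreal (\<rho> c)) + k * (\<Sum>c\<in>C. \<Sum>c'\<in>C. ennreal (\<rho> c) * ennreal (\<rho> c') * J c c')"
    by (simp add: distrib_left sum.distrib sum_distrib_left mult_ac del: sum_ennreal)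
  moreover have "(\<Sum>c\<in>C. ennreal (\<rho> c)) = 1"
    using assms by simp
  moreover have "ennreal (\<rho> c) * ennreal (\<rho> c') = ennreal (\<rho> c * \<rho> c')" if "c \<in> C" "c' \<in> C" for c c'
    using assms(1) that by (simp add: ennreal_mult)
  ultimately show ?thesis
    by simp
qed

theorem lemma3p1:
  fixes C :: "'c set" and \<rho> :: "'c \<Rightarrow> real" and X :: "'a measure"
    and D :: "'c \<Rightarrow> 'a measure" and f :: "'a \<Rightarrow> real^'d"
  assumes "finite C" and "C \<noteq> {}"
    and "\<And>c. c \<in> C \<Longrightarrow> \<rho> c > 0" and "(\<Sum>c\<in>C. \<rho> c) = 1"
    and "\<And>c. c \<in> C \<Longrightarrow> prob_space (D c)"
    and "\<And>c. c \<in> C \<Longrightarrow> sets (D c) = sets X"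
    and "f \<in> borel_measurable X"
    and "\<And>c. c \<in> C \<Longrightarrow> integrable (D c) f"
  shows "L_sup C \<rho> D f \<le> L_sup_mu C \<rho> D f
     \<and> L_sup_mu C \<rho> D f
         \<le> ennreal (1 / Min (\<rho> ` C)) * L_un C \<rho> D f + ennreal (ln (real (card C)))"
proof
  show "L_sup C \<rho> D f \<le> L_sup_mu C \<rho> D f"
    unfolding L_sup_def L_sup_mu_def by (rule INF_lower) simp
next
  define N k where "N = ennreal (ln (card C))" and "k = ennreal (1 / Min (\<rho> ` C))"
  define J where "J c c' = (\<integral>\<^sup>+ x. \<integral>\<^sup>+ xp. \<integral>\<^sup>+ xn. ennreal (un_loss f x xp xn) \<partial>D c' \<partial>D c \<partial>D c)"
    for c c'
  have "L_sup_mu C \<rho> D f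
      = (\<Sum>c\<in>C. ennreal (\<rho> c) * (\<integral>\<^sup>+ x. ennreal (sup_loss C (mean_classifier D f) f x c) \<partial>D c))"
    unfolding L_sup_mu_def L_sup_W_def ..
  also have "\<dots> \<le> (\<Sum>c\<in>C. ennreal (\<rho> c) * (N + k * (\<Sum>c'\<in>C. ennreal (\<rho> c') * J c c')))"
    unfolding N_def k_def J_def
    by (intro sum_mono mult_left_mono nn_integral_sup_loss_mean_classifier_le[OF assms(1) _ assms(3,5,8)]) simp_all
  also have "\<dots> = N + k * L_un C \<rho> D f"
    using assms(3,4) unfolding L_un_def J_def
    by (intro sum_weighted_add_mult_weighted_sum) (simp_all add: less_imp_le)
  finally show "L_sup_mu C \<rho> D f
      \<le> ennreal (1 / Min (\<rho> ` C)) * L_un C \<rho> D f + ennreal (ln (real (card C)))"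
    unfolding N_def k_def by (simp add: add.commute)
qed

end
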